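(* Let $\mu$ be a valuated matroid on $[n]$ and let $A\in K^{n\times n}$ be a weakly monomial matrix. Then $\mathrm{val}(A)\odot\overline{\operatorname{trop}}(\mu)\subseteq\mathbb{P}(\mathbb{T}^n)$ is a tropical linear space.
   Context: $K$ is a field with non-Archimedean valuation $\mathrm{val}:K\to\mathbb{T}=\mathbb{R}\cup\{\infty\}$; $\mathbb{P}(\mathbb{T}^n)=(\mathbb{T}^n\setminus\{(\infty,\dots,\infty)\})/\mathbb{R}\mathbf{1}$; $(\mathrm{val}(A)\odot v)_i=\min_j(\mathrm{val}(A_{ij})+v_j)$, applied pointwise to sets. A matrix is weakly monomial if each row has at most one nonzero entry. Valuated matroid of rank $r$ on $[n]$: $\nu:\binom{[n]}{r}\to\mathbb{T}$, not identically $\infty$, such that for all $I,J$, $i\in I\setminus J$ there is $j\in J\setminus I$ with $\nu(I)+\nu(J)\ge\nu((I\setminus i)\cup j)+\nu((J\setminus j)\cup i)$. A tropical linear space is a set of the form $\overline{\operatorname{trop}}(\nu)$: the set of $x\in\mathbb{P}(\mathbb{T}^n)$ such that for each $I\in\binom{[n]}{r+1}$ with $C_\nu(I)\neq(\infty,\dots)$, where $C_\nu(I)_i=\nu(I\setminus i)$ for $i\in I$ and $\infty$ else, $\min_i(C_\nu(I)_i+x_i)$ is attained at least twice ($\infty$ counts as twice). *)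

theory Defs
  imports "HOL-Library.Extended_Real"
begin

text \<open>Tropical numbers T = R \<union> {\<infinity>} are modelled inside ereal (values never -\<infinity>).
  The ground set [n] is a finite type 'n. A subset of P(T^n) is modelled by its
  preimage in T^n minus the all-\<infinity> vector (a set closed under adding real constants).\<close>

definition nonarch_valuation :: "('k::field \<Rightarrow> ereal) \<Rightarrow> bool" where
  "nonarch_valuation v \<longleftrightarrow>
     (\<forall>x. v x \<noteq> -\<infinity>) \<and> (\<forall>x. v x = \<infinity> \<longleftrightarrow> x = 0) \<and>
     (\<forall>x y. v (x * y) = v x + v y) \<and>
     (\<forall>x y. min (v x) (v y) \<le> v (x + y))"

definition valuated_matroid :: "nat \<Rightarrow> ('n::finite set \<Rightarrow> ereal) \<Rightarrow> bool" where
  "valuated_matroid r \<nu> \<longleftrightarrow>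
     (\<forall>I. \<nu> I \<noteq> -\<infinity>) \<and>
     (\<exists>I. card I = r \<and> \<nu> I \<noteq> \<infinity>) \<and>
     (\<forall>I J. card I = r \<longrightarrow> card J = r \<longrightarrow>
        (\<forall>i\<in>I - J. \<exists>j\<in>J - I.
           \<nu> I + \<nu> J \<ge> \<nu> ((I - {i}) \<union> {j}) + \<nu> ((J - {j}) \<union> {i})))"

definition proj_points :: "('n::finite \<Rightarrow> ereal) set" where
  "proj_points = {x. (\<forall>i. x i \<noteq> -\<infinity>) \<and> (\<exists>i. x i \<noteq> \<infinity>)}"

definition min_twice :: "('n::finite \<Rightarrow> ereal) \<Rightarrow> bool" where
  "min_twice f \<longleftrightarrow> Min (range f) = \<infinity> \<or>
     (\<exists>i j. i \<noteq> j \<and> f i = Min (range f) \<and> f j = Min (range f))"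

definition circuit_vec :: "('n::finite set \<Rightarrow> ereal) \<Rightarrow> 'n set \<Rightarrow> 'n \<Rightarrow> ereal" where
  "circuit_vec \<nu> I = (\<lambda>i. if i \<in> I then \<nu> (I - {i}) else \<infinity>)"

definition trop_lin :: "nat \<Rightarrow> ('n::finite set \<Rightarrow> ereal) \<Rightarrow> ('n \<Rightarrow> ereal) set" where
  "trop_lin r \<nu> = {x \<in> proj_points.
     \<forall>I. card I = r + 1 \<longrightarrow> (\<exists>i. circuit_vec \<nu> I i \<noteq> \<infinity>) \<longrightarrow>
        min_twice (\<lambda>i. circuit_vec \<nu> I i + x i)}"

definition tropical_linear_space :: "('n::finite \<Rightarrow> ereal) set \<Rightarrow> bool" where
  "tropical_linear_space S \<longleftrightarrow> (\<exists>r \<nu>. valuated_matroid r \<nu> \<and> S = trop_lin r \<nu>)"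

definition trop_mat_vec :: "('n::finite \<Rightarrow> 'n \<Rightarrow> ereal) \<Rightarrow> ('n \<Rightarrow> ereal) \<Rightarrow> ('n \<Rightarrow> ereal)" where
  "trop_mat_vec M v = (\<lambda>i. Min (range (\<lambda>j. M i j + v j)))"

definition trop_mat_image :: "('n::finite \<Rightarrow> 'n \<Rightarrow> ereal) \<Rightarrow> ('n \<Rightarrow> ereal) set \<Rightarrow> ('n \<Rightarrow> ereal) set" where
  "trop_mat_image M S = (trop_mat_vec M ` S) \<inter> proj_points"

definition weakly_monomial :: "('n::finite \<Rightarrow> 'n \<Rightarrow> 'k::zero) \<Rightarrow> bool" where
  "weakly_monomial A \<longleftrightarrow> (\<forall>i. card {j. A i j \<noteq> 0} \<le> 1)"

end

theory Submission
  imports Defs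
begin

text \<open>The valuation of a weakly monomial matrix is \<open>c i\<close> at \<open>(i, \<sigma> i)\<close> for the rows \<open>i \<in> R\<close>
  that are not zero and \<open>\<infinity>\<close> elsewhere, so it maps \<open>x\<close> to \<open>(c i + x (\<sigma> i))\<^sub>i\<close>, with
  \<open>\<infinity>\<close> in the zero rows. Let \<open>B0\<close> be a basis of \<open>\<mu>\<close> meeting \<open>\<sigma> ` R\<close> in the maximal number
  \<open>k\<close> of elements and \<open>T = B0 - \<sigma> ` R\<close>. The image is the tropical linear space of
  \<open>I \<mapsto> (\<Sum>i\<in>I. c i) + \<mu> (\<sigma> ` I \<union> T)\<close>, for \<open>k\<close>-sets \<open>I \<subseteq> R\<close> on which \<open>\<sigma>\<close> is injective.

  Image points satisfy the circuit conditions of this valuated matroid: on a circuit \<open>I\<close>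
  where \<open>\<sigma>\<close> is injective the circuit condition is the one of \<open>\<mu>\<close> at \<open>\<sigma> ` I \<union> T\<close> (whose
  entries on \<open>T\<close> are infinite by maximality of \<open>B0\<close>), and otherwise two elements of \<open>I\<close>
  with the same image give equal terms. Conversely, a point \<open>y\<close> of a tropical linear space
  is the tropical sum of the fundamental cocircuit vectors of bases that are optimal for
  \<open>y\<close>; the cocircuit vectors of the new valuated matroid are images of cocircuit vectors of
  \<open>\<mu>\<close>, and the corresponding tropical sum of those lies in the tropical linear space of \<open>\<mu>\<close>.\<close>

section \<open>The circuit condition\<close>

lemma min_twice_iff:
  fixes f :: "'n::finite \<Rightarrow> ereal"
  shows "min_twice f \<longleftrightarrow> (\<forall>i. f i \<noteq> \<infinity> \<longrightarrow> (\<exists>j. j \<noteq> i \<and> f j \<le> f i))"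
proof -
  define m where "m = Min (range f)"
  have m_le: "m \<le> f i" for i
    unfolding m_def by simp
  have "m \<in> range f"
    unfolding m_def by (rule Min_in) auto
  then obtain i0 where i0: "f i0 = m"
    by auto
  show ?thesis
  proof
    assume "min_twice f"
    then consider "m = \<infinity>" | i j where "i \<noteq> j" "f i = m" "f j = m"
      unfolding min_twice_def m_def by blast
    then show "\<forall>i. f i \<noteq> \<infinity> \<longrightarrow> (\<exists>j. j \<noteq> i \<and> f j \<le> f i)"
    proof cases
      case 1
      then show ?thesis
        using m_le by (metis ereal_infty_less_eq(1))
    next
      case (2 i j)
      then show ?thesis
        using m_le by metis
    qed
  next
    assume twice: "\<forall>i. f i \<noteq> \<infinity> \<longrightarrow> (\<exists>j. j \<noteq> i \<and> f j \<le> f i)"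
    show "min_twice f"
    proof (cases "m = \<infinity>")
      case False
      then obtain j where "j \<noteq> i0" "f j \<le> f i0"
        using twice i0 by metis
      then have "f j = m"
        using m_le[of j] i0 by simp
      then show ?thesis
        using \<open>j \<noteq> i0\<close> i0 unfolding min_twice_def m_def[symmetric] by blast
    qed (simp add: min_twice_def m_def[symmetric])
  qed
qed

definition circuit_condition :: "nat \<Rightarrow> ('n::finite set \<Rightarrow> ereal) \<Rightarrow> ('n \<Rightarrow> ereal) \<Rightarrow> bool" where
  "circuit_condition r \<nu> x \<longleftrightarrow> (\<forall>I. card I = r + 1 \<longrightarrow> (\<forall>i. circuit_vec \<nu> I i + x i \<noteq> \<infinity> \<longrightarrow>
     (\<exists>j. j \<noteq> i \<and> circuit_vec \<nu> I j + x j \<le> circuit_vec \<nu> I i + x i)))"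

lemma circuit_conditionD:
  assumes "circuit_condition r \<nu> x" "card I = r + 1" "circuit_vec \<nu> I i + x i \<noteq> \<infinity>"
  obtains j where "j \<noteq> i" "circuit_vec \<nu> I j + x j \<le> circuit_vec \<nu> I i + x i"
  using assms unfolding circuit_condition_def by blast

lemma trop_lin_iff: "x \<in> trop_lin r \<nu> \<longleftrightarrow> x \<in> proj_points \<and> circuit_condition r \<nu> x"
proof -
  have "min_twice (\<lambda>i. circuit_vec \<nu> I i + x i)" if "\<forall>i. circuit_vec \<nu> I i = \<infinity>" for I
    using that by (simp add: min_twice_iff)
  then show ?thesis
    unfolding trop_lin_def circuit_condition_def min_twice_iff[symmetric] by auto
qed

lemma circuit_vec_finite_imp:
  assumes "circuit_vec \<nu> I j + a \<noteq> \<infinity>"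
  shows "j \<in> I" "\<nu> (I - {j}) \<noteq> \<infinity>" "a \<noteq> \<infinity>"
  using assms unfolding circuit_vec_def by (auto split: if_splits)

definition cocircuit_vec :: "('n::finite set \<Rightarrow> ereal) \<Rightarrow> 'n set \<Rightarrow> 'n \<Rightarrow> ereal" where
  "cocircuit_vec \<nu> K = (\<lambda>j. if j \<in> K then \<infinity> else \<nu> (insert j K))"

lemma circuit_condition_cocircuit_vec:
  assumes vm: "valuated_matroid r \<nu>" and card_K: "card K + 1 = r"
  shows "circuit_condition r \<nu> (cocircuit_vec \<nu> K)"
  unfolding circuit_condition_def
proof (intro allI impI)
  fix I i
  assume card_I: "card I = r + 1" and fin: "circuit_vec \<nu> I i + cocircuit_vec \<nu> K i \<noteq> \<infinity>"
  have iI: "i \<in> I" and iK: "i \<notin> K"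
    using fin unfolding circuit_vec_def cocircuit_vec_def by (auto split: if_splits)
  have "card (insert i K) = r" "card (I - {i}) = r" "i \<in> insert i K - (I - {i})"
    using iI iK card_K card_I by auto
  then obtain j where j: "j \<in> (I - {i}) - insert i K" and exch:
    "\<nu> ((insert i K - {i}) \<union> {j}) + \<nu> ((I - {i} - {j}) \<union> {i}) \<le> \<nu> (insert i K) + \<nu> (I - {i})"
    using vm unfolding valuated_matroid_def by blast
  have "(insert i K - {i}) \<union> {j} = insert j K" "(I - {i} - {j}) \<union> {i} = I - {j}"
    using iI iK j by auto
  then have "circuit_vec \<nu> I j + cocircuit_vec \<nu> K j \<le> circuit_vec \<nu> I i + cocircuit_vec \<nu> K i"
    using exch j iI iK unfolding circuit_vec_def cocircuit_vec_def by (simp add: add.commute)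
  then show "\<exists>j. j \<noteq> i \<and> circuit_vec \<nu> I j + cocircuit_vec \<nu> K j \<le> circuit_vec \<nu> I i + cocircuit_vec \<nu> K i"
    using j by blast
qed

lemma circuit_condition_shift:
  assumes "circuit_condition r \<nu> x"
  shows "circuit_condition r \<nu> (\<lambda>j. ereal a + x j)"
  unfolding circuit_condition_def
proof (intro allI impI)
  fix I i
  assume card_I: "card I = r + 1" and fin: "circuit_vec \<nu> I i + (ereal a + x i) \<noteq> \<infinity>"
  have shift: "circuit_vec \<nu> I j + (ereal a + x j) = ereal a + (circuit_vec \<nu> I j + x j)" for j
    by (simp add: ac_simps)
  have "circuit_vec \<nu> I i + x i \<noteq> \<infinity>"
    using fin shift[of i] by auto
  then obtain j where "j \<noteq> i" "circuit_vec \<nu> I j + x j \<le> circuit_vec \<nu> I i + x i"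
    by (rule circuit_conditionD[OF assms card_I])
  then show "\<exists>j. j \<noteq> i \<and> circuit_vec \<nu> I j + (ereal a + x j) \<le> circuit_vec \<nu> I i + (ereal a + x i)"
    unfolding shift by (metis add_left_mono)
qed

lemma circuit_condition_Min:
  fixes x :: "'e \<Rightarrow> 'n::finite \<Rightarrow> ereal"
  assumes E: "finite E" "E \<noteq> {}" and x: "\<And>e. e \<in> E \<Longrightarrow> circuit_condition r \<nu> (x e)"
  shows "circuit_condition r \<nu> (\<lambda>j. Min ((\<lambda>e. x e j) ` E))"
  unfolding circuit_condition_def
proof (intro allI impI)
  fix I i
  assume card_I: "card I = r + 1" and fin: "circuit_vec \<nu> I i + Min ((\<lambda>e. x e i) ` E) \<noteq> \<infinity>"
  have "Min ((\<lambda>e. x e i) ` E) \<in> (\<lambda>e. x e i) ` E"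
    using E by (intro Min_in) auto
  then obtain e where e: "e \<in> E" "Min ((\<lambda>e. x e i) ` E) = x e i"
    by auto
  moreover have "circuit_vec \<nu> I i + x e i \<noteq> \<infinity>"
    using fin e(2) by simp
  ultimately obtain j where j: "j \<noteq> i" "circuit_vec \<nu> I j + x e j \<le> circuit_vec \<nu> I i + x e i"
    using circuit_conditionD[OF x card_I] by blast
  have "circuit_vec \<nu> I j + Min ((\<lambda>e. x e j) ` E) \<le> circuit_vec \<nu> I j + x e j"
    using E e by (intro add_left_mono) simp
  then show "\<exists>j. j \<noteq> i \<and> circuit_vec \<nu> I j + Min ((\<lambda>e. x e j) ` E)
      \<le> circuit_vec \<nu> I i + Min ((\<lambda>e. x e i) ` E)"
    using j e by (metis order_trans)
qed

section \<open>Points of a tropical linear space as tropical sums of cocircuit vectors\<close>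

lemma ereal_le_shift:
  fixes Y Q :: ereal
  assumes "ereal p + Y \<le> Q + ereal q" "Y \<noteq> -\<infinity>" "Q \<noteq> -\<infinity>"
  shows "Y \<le> ereal (q - p) + Q"
  using assms by (cases Y; cases Q) auto

lemma ereal_add_regroup: "ereal a + X + (ereal b + Y) = ereal (a + b) + (X + Y)"
  by (cases X; cases Y) auto

lemma finite_obtain_minimizer:
  fixes f :: "'a \<Rightarrow> 'b::linorder"
  assumes "finite S" "S \<noteq> {}"
  obtains x where "x \<in> S" "\<And>x'. x' \<in> S \<Longrightarrow> f x \<le> f x'"
proof -
  have "Min (f ` S) \<in> f ` S"
    using assms by simp
  then obtain x where "x \<in> S" "f x = Min (f ` S)"
    by auto
  with assms show thesis
    by (intro that) auto
qed

lemma finite_obtain_maximizer: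
  fixes f :: "'a \<Rightarrow> 'b::linorder"
  assumes "finite S" "S \<noteq> {}"
  obtains x where "x \<in> S" "\<And>x'. x' \<in> S \<Longrightarrow> f x' \<le> f x"
proof -
  have "Max (f ` S) \<in> f ` S"
    using assms by simp
  then obtain x where "x \<in> S" "f x = Max (f ` S)"
    by auto
  with assms show thesis
    by (intro that) auto
qed

locale trop_lin_point =
  fixes \<nu> :: "'n::finite set \<Rightarrow> ereal" and k :: nat and y :: "'n \<Rightarrow> ereal"
  assumes vm: "valuated_matroid k \<nu>" and y_in: "y \<in> trop_lin k \<nu>"
begin

definition support :: "'n set" where
  "support = {f. y f \<noteq> \<infinity>}"

definition bases :: "'n set set" where
  "bases = {B. card B = k \<and> \<nu> B \<noteq> \<infinity>}"

definition max_bases :: "'n set set" where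
  "max_bases = {B \<in> bases. \<forall>B'\<in>bases. card (B' - support) \<le> card (B - support)}"

text \<open>Up to the constant \<open>\<Sum>b\<in>support. y b\<close>, the weight of \<open>B\<close> is
  \<open>\<nu> B - (\<Sum>b\<in>B \<inter> support. y b)\<close>; it is written without subtraction in \<open>ereal\<close>.
  Optimal bases first avoid the support as much as possible, so that no exchange brings in
  a coordinate where \<open>y\<close> is infinite, and then minimise the weight.\<close>
definition weight :: "'n set \<Rightarrow> ereal" where
  "weight B = \<nu> B + (\<Sum>b\<in>support - B. y b)"

definition optimal_bases :: "'n set set" where
  "optimal_bases = {B \<in> max_bases. \<forall>B'\<in>max_bases. weight B \<le> weight B'}"

lemma y_not_minf: "y f \<noteq> -\<infinity>"
  using y_in unfolding trop_lin_def proj_points_def by auto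

lemma \<nu>_not_minf: "\<nu> B \<noteq> -\<infinity>"
  using vm unfolding valuated_matroid_def by auto

lemma y_circuit_condition: "circuit_condition k \<nu> y"
  using y_in trop_lin_iff by blast

lemma sum_support_real:
  assumes "A \<subseteq> support"
  shows "(\<Sum>b\<in>A. y b) = ereal (\<Sum>b\<in>A. real_of_ereal (y b))"
proof -
  have "y b = ereal (real_of_ereal (y b))" if "b \<in> A" for b
    using that assms y_not_minf[of b] unfolding support_def by (cases "y b") auto
  then show ?thesis
    by (simp add: sum_ereal[symmetric])
qed

lemma optimal_bases_nonempty: "optimal_bases \<noteq> {}"
proof -
  have "bases \<noteq> {}"
    using vm unfolding valuated_matroid_def bases_def by auto
  then obtain B where "B \<in> bases" "\<And>B'. B' \<in> bases \<Longrightarrow> card (B' - support) \<le> card (B - support)"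
    using finite_obtain_maximizer[OF finite, of bases "\<lambda>B. card (B - support)"] by blast
  then have "max_bases \<noteq> {}"
    unfolding max_bases_def by blast
  then show ?thesis
    unfolding optimal_bases_def by (rule finite_obtain_minimizer[OF finite, of _ weight]) blast
qed

lemma weight_exchange:
  assumes "e \<in> B" "e \<in> support" "f \<in> support" "f \<notin> B"
  shows "weight (insert f (B - {e})) + y f = \<nu> (insert f (B - {e})) + y e + (\<Sum>b\<in>support - B. y b)"
proof -
  have "support - insert f (B - {e}) = insert e (support - B) - {f}"
    using assms by auto
  moreover have "y f + (\<Sum>b\<in>insert e (support - B) - {f}. y b) = (\<Sum>b\<in>insert e (support - B). y b)"
    using assms by (intro sum.remove[symmetric]) auto
  ultimately have "(\<Sum>b\<in>support - insert f (B - {e}). y b) + y f = y e + (\<Sum>b\<in>support - B. y b)"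
    using assms by (simp add: ac_simps)
  then show ?thesis
    unfolding weight_def by (simp only: add.assoc)
qed

lemma optimal_basis_exchange:
  assumes B: "B \<in> optimal_bases" and e: "e \<in> B" "e \<in> support" and f: "f \<notin> B"
  shows "\<nu> B + y f \<le> \<nu> (insert f (B - {e})) + y e"
proof (cases "\<nu> (insert f (B - {e})) = \<infinity>")
  case False
  define B' where "B' = insert f (B - {e})"
  have B_max: "B \<in> max_bases" and B_min: "\<And>B'. B' \<in> max_bases \<Longrightarrow> weight B \<le> weight B'"
    using B unfolding optimal_bases_def by auto
  have "card B = k"
    using B_max unfolding max_bases_def bases_def by auto
  moreover have "card B > 0"
    using e by (auto simp: card_gt_0_iff)
  ultimately have B'_basis: "B' \<in> bases"
    using False e f unfolding bases_def B'_def by (simp add: card.insert_remove)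
  then have le: "card (B' - support) \<le> card (B - support)"
    using B_max unfolding max_bases_def by blast
  have f_supp: "f \<in> support"
  proof (rule ccontr)
    assume "f \<notin> support"
    then have "B' - support = insert f (B - support)"
      using e unfolding B'_def by auto
    then show False
      using le f by simp
  qed
  then have "B' - support = B - support"
    using e unfolding B'_def by auto
  then have "B' \<in> max_bases"
    using B_max B'_basis unfolding max_bases_def by simp
  have "(\<nu> B + y f) + (\<Sum>b\<in>support - B. y b) = weight B + y f"
    unfolding weight_def by (simp add: ac_simps)
  also have "\<dots> \<le> weight B' + y f"
    using B_min[OF \<open>B' \<in> max_bases\<close>] by (rule add_right_mono)
  also have "\<dots> = (\<nu> B' + y e) + (\<Sum>b\<in>support - B. y b)"
    unfolding B'_def by (rule weight_exchange[OF e f_supp f])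
  finally show ?thesis
    using sum_support_real[of "support - B"] unfolding B'_def by (simp add: ereal_add_le_add_iff2)
qed simp

lemma exchange_into_basis:
  assumes B: "B \<in> bases" and e: "e \<in> support" "e \<notin> B"
  obtains j where "j \<in> B" "j \<in> support" "insert e (B - {j}) \<in> bases"
    "\<nu> (insert e (B - {j})) + y j \<le> \<nu> B + y e"
proof -
  have card_B: "card B = k" and fin_B: "\<nu> B \<noteq> \<infinity>"
    using B unfolding bases_def by auto
  have card_I: "card (insert e B) = k + 1" and I_e: "insert e B - {e} = B"
    using e(2) card_B by auto
  have "y e \<noteq> \<infinity>"
    using e unfolding support_def by simp
  then have fin_e: "circuit_vec \<nu> (insert e B) e + y e \<noteq> \<infinity>"
    using fin_B I_e unfolding circuit_vec_def by simp
  then obtain j where "j \<noteq> e" and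
    le: "circuit_vec \<nu> (insert e B) j + y j \<le> circuit_vec \<nu> (insert e B) e + y e"
    by (rule circuit_conditionD[OF y_circuit_condition card_I])
  then have fin_j: "circuit_vec \<nu> (insert e B) j + y j \<noteq> \<infinity>"
    using fin_e by (auto simp: top_unique)
  note j_circ = circuit_vec_finite_imp[OF fin_j]
  have j: "j \<in> B" "j \<in> support"
    using j_circ(1,3) \<open>j \<noteq> e\<close> unfolding support_def by auto
  have I_j: "insert e B - {j} = insert e (B - {j})"
    using \<open>j \<noteq> e\<close> by auto
  have "card (insert e (B - {j})) = k"
    using card_B j(1) e(2) card_Suc_Diff1[of B j] by simp
  then have "insert e (B - {j}) \<in> bases"
    using j_circ(2) unfolding I_j bases_def by simp
  moreover have "\<nu> (insert e (B - {j})) + y j \<le> \<nu> B + y e"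
    using le I_e j(1) unfolding circuit_vec_def I_j by simp
  ultimately show thesis
    using that j by blast
qed

lemma optimal_basis_containing:
  assumes e: "e \<in> support"
  obtains B where "B \<in> optimal_bases" "e \<in> B"
proof -
  obtain B1 where B1: "B1 \<in> optimal_bases"
    using optimal_bases_nonempty by blast
  show thesis
  proof (cases "e \<in> B1")
    case True
    then show thesis
      using B1 that by blast
  next
    case False
    have B1_max: "B1 \<in> max_bases" and B1_min: "\<And>B. B \<in> max_bases \<Longrightarrow> weight B1 \<le> weight B"
      using B1 unfolding optimal_bases_def by auto
    then obtain j where j: "j \<in> B1" "j \<in> support" and B_basis: "insert e (B1 - {j}) \<in> bases"
      and le: "\<nu> (insert e (B1 - {j})) + y j \<le> \<nu> B1 + y e"
      using exchange_into_basis[OF _ e False] unfolding max_bases_def by blast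
    define B where "B = insert e (B1 - {j})"
    have "B - support = B1 - support"
      using e j unfolding B_def by auto
    then have B_max: "B \<in> max_bases"
      using B1_max B_basis unfolding max_bases_def B_def by simp
    have "weight B + y e = (\<nu> B + y j) + (\<Sum>b\<in>support - B1. y b)"
      unfolding B_def by (rule weight_exchange[OF j e False])
    also have "\<dots> \<le> (\<nu> B1 + y e) + (\<Sum>b\<in>support - B1. y b)"
      using le unfolding B_def by (rule add_right_mono)
    also have "\<dots> = weight B1 + y e"
      unfolding weight_def by (simp add: ac_simps)
    finally have "weight B \<le> weight B1"
      using e y_not_minf[of e] unfolding support_def by (simp add: ereal_add_le_add_iff2)
    then have "B \<in> optimal_bases"
      using B_max B1_min unfolding optimal_bases_def by (blast intro: order_trans)
    then show thesis
      using that unfolding B_def by blast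
  qed
qed

lemma fundamental_cocircuit:
  assumes B: "B \<in> optimal_bases" and e: "e \<in> B" "e \<in> support"
  defines "a \<equiv> real_of_ereal (y e) - real_of_ereal (\<nu> B)"
  shows "ereal a + cocircuit_vec \<nu> (B - {e}) e = y e"
    and "y f \<le> ereal a + cocircuit_vec \<nu> (B - {e}) f"
proof -
  have "\<nu> B \<noteq> \<infinity>"
    using B unfolding optimal_bases_def max_bases_def bases_def by auto
  then obtain p where p: "\<nu> B = ereal p"
    using \<nu>_not_minf[of B] by (cases "\<nu> B") auto
  obtain q where q: "y e = ereal q"
    using e(2) y_not_minf[of e] unfolding support_def by (cases "y e") auto
  have a: "a = q - p"
    unfolding a_def p q by simp
  have ins: "insert e (B - {e}) = B"
    using e by auto
  show at_e: "ereal a + cocircuit_vec \<nu> (B - {e}) e = y e"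
    unfolding cocircuit_vec_def a ins p q by simp
  show "y f \<le> ereal a + cocircuit_vec \<nu> (B - {e}) f"
  proof (cases "f \<in> B")
    case True
    then show ?thesis
      using at_e unfolding cocircuit_vec_def by (cases "f = e") auto
  next
    case False
    then have "ereal p + y f \<le> \<nu> (insert f (B - {e})) + ereal q"
      using optimal_basis_exchange[OF B e] p q by simp
    then have "y f \<le> ereal a + \<nu> (insert f (B - {e}))"
      unfolding a by (rule ereal_le_shift) (use y_not_minf \<nu>_not_minf in auto)
    then show ?thesis
      using False unfolding cocircuit_vec_def by simp
  qed
qed

lemma cocircuit_decomposition:
  obtains K a where "support \<noteq> {}"
    and "\<And>e. e \<in> support \<Longrightarrow> e \<notin> K e \<and> card (K e) + 1 = k \<and> \<nu> (insert e (K e)) \<noteq> \<infinity>"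
    and "y = (\<lambda>f. Min ((\<lambda>e. ereal (a e) + cocircuit_vec \<nu> (K e) f) ` support))"
proof -
  have "\<forall>e\<in>support. \<exists>B. B \<in> optimal_bases \<and> e \<in> B"
    using optimal_basis_containing by metis
  then obtain B where B: "\<And>e. e \<in> support \<Longrightarrow> B e \<in> optimal_bases \<and> e \<in> B e"
    by metis
  define K where "K e = B e - {e}" for e
  define a where "a e = real_of_ereal (y e) - real_of_ereal (\<nu> (B e))" for e
  note fund = fundamental_cocircuit[OF conjunct1[OF B] conjunct2[OF B], folded K_def a_def]
  have supp_ne: "support \<noteq> {}"
    using y_in unfolding trop_lin_def proj_points_def support_def by auto
  have "y f = Min ((\<lambda>e. ereal (a e) + cocircuit_vec \<nu> (K e) f) ` support)" for f
  proof (rule antisym)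
    show "y f \<le> Min ((\<lambda>e. ereal (a e) + cocircuit_vec \<nu> (K e) f) ` support)"
      using supp_ne fund(2) by simp
    show "Min ((\<lambda>e. ereal (a e) + cocircuit_vec \<nu> (K e) f) ` support) \<le> y f"
    proof (cases "f \<in> support")
      case True
      then show ?thesis
        using fund(1)[OF True] supp_ne by (auto simp: Min_le_iff intro!: bexI[of _ f])
    next
      case False
      then show ?thesis
        unfolding support_def by simp
    qed
  qed
  moreover have "e \<notin> K e \<and> card (K e) + 1 = k \<and> \<nu> (insert e (K e)) \<noteq> \<infinity>" if "e \<in> support" for e
  proof -
    have "B e \<in> bases" "insert e (K e) = B e" "e \<in> B e"
      using B[OF that] unfolding optimal_bases_def max_bases_def K_def by auto
    then show ?thesis
      using card_Suc_Diff1[of "B e" e] unfolding bases_def K_def by auto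
  qed
  ultimately show thesis
    using that supp_ne by blast
qed

end

section \<open>The image under a weakly monomial matrix\<close>

lemma trop_mat_vec_shift:
  "trop_mat_vec M (\<lambda>j. ereal a + x j) i = ereal a + trop_mat_vec M x i"
proof -
  have "ereal a + trop_mat_vec M x i = Min ((\<lambda>z. ereal a + z) ` range (\<lambda>j. M i j + x j))"
    unfolding trop_mat_vec_def by (rule mono_Min_commute) (auto intro: monoI add_left_mono)
  then show ?thesis
    unfolding trop_mat_vec_def by (simp add: image_image ac_simps)
qed

lemma trop_mat_vec_Min:
  assumes "finite E" "E \<noteq> {}"
  shows "trop_mat_vec M (\<lambda>j. Min ((\<lambda>e. x e j) ` E)) i = Min ((\<lambda>e. trop_mat_vec M (x e) i) ` E)"
proof -
  have "M i j + Min ((\<lambda>e. x e j) ` E) = Min ((\<lambda>e. M i j + x e j) ` E)" for j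
    using assms by (subst mono_Min_commute) (auto intro: monoI add_left_mono simp: image_image)
  then have "z \<le> trop_mat_vec M (\<lambda>j. Min ((\<lambda>e. x e j) ` E)) i \<longleftrightarrow>
      z \<le> Min ((\<lambda>e. trop_mat_vec M (x e) i) ` E)" for z
    using assms unfolding trop_mat_vec_def by auto
  then show ?thesis
    by (meson antisym order_refl)
qed

lemma trop_mat_vec_finite_imp:
  assumes "trop_mat_vec M x i \<noteq> \<infinity>"
  obtains j where "x j \<noteq> \<infinity>"
proof -
  have "trop_mat_vec M x i \<in> range (\<lambda>j. M i j + x j)"
    unfolding trop_mat_vec_def by (rule Min_in) auto
  then show thesis
    using assms that by auto
qed

definition monomial_mat :: "'n set \<Rightarrow> ('n \<Rightarrow> 'n) \<Rightarrow> ('n \<Rightarrow> real) \<Rightarrow> 'n \<Rightarrow> 'n \<Rightarrow> ereal" where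
  "monomial_mat R \<sigma> c = (\<lambda>i j. if i \<in> R \<and> j = \<sigma> i then ereal (c i) else \<infinity>)"

lemma trop_mat_vec_monomial_mat:
  fixes x :: "'n::finite \<Rightarrow> ereal"
  shows "trop_mat_vec (monomial_mat R \<sigma> c) x i = (if i \<in> R then ereal (c i) + x (\<sigma> i) else \<infinity>)"
  unfolding trop_mat_vec_def
proof (rule Min_eqI)
  show "(if i \<in> R then ereal (c i) + x (\<sigma> i) else \<infinity>) \<in> range (\<lambda>j. monomial_mat R \<sigma> c i j + x j)"
    by (rule image_eqI[of _ _ "\<sigma> i"]) (auto simp: monomial_mat_def)
qed (auto simp: monomial_mat_def)

lemma weakly_monomial_val_eq_monomial_mat:
  fixes val :: "'k::field \<Rightarrow> ereal" and A :: "'n::finite \<Rightarrow> 'n \<Rightarrow> 'k"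
  assumes val: "nonarch_valuation val" and A: "weakly_monomial A"
  shows "\<exists>R \<sigma> c. (\<lambda>i j. val (A i j)) = monomial_mat R \<sigma> c"
proof -
  define R where "R = {i. \<exists>j. A i j \<noteq> 0}"
  define \<sigma> where "\<sigma> i = (SOME j. A i j \<noteq> 0)" for i
  define c where "c i = real_of_ereal (val (A i (\<sigma> i)))" for i
  have val_fin: "val a = ereal (real_of_ereal (val a))" if "a \<noteq> 0" for a
    using val that unfolding nonarch_valuation_def by (cases "val a") auto
  have "A i j \<noteq> 0 \<longleftrightarrow> i \<in> R \<and> j = \<sigma> i" for i j
  proof
    assume nz: "A i j \<noteq> 0"
    then have "A i (\<sigma> i) \<noteq> 0"
      unfolding \<sigma>_def by (rule someI)
    moreover have "card {j. A i j \<noteq> 0} \<le> Suc 0"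
      using A unfolding weakly_monomial_def by simp
    ultimately show "i \<in> R \<and> j = \<sigma> i"
      using nz unfolding R_def by (auto simp: card_le_Suc0_iff_eq)
  next
    assume "i \<in> R \<and> j = \<sigma> i"
    then show "A i j \<noteq> 0"
      using someI_ex[of "\<lambda>j. A i j \<noteq> 0"] unfolding R_def \<sigma>_def by auto
  qed
  then have "val (A i j) = monomial_mat R \<sigma> c i j" for i j
    using val val_fin[of "A i j"] unfolding monomial_mat_def c_def nonarch_valuation_def
    by (cases "A i j = 0") auto
  then show ?thesis
    by blast
qed

locale monomial_image =
  fixes \<nu> :: "'n::finite set \<Rightarrow> ereal" and r :: nat
    and R :: "'n set" and \<sigma> :: "'n \<Rightarrow> 'n" and c :: "'n \<Rightarrow> real" and B0 :: "'n set"
  assumes vm: "valuated_matroid r \<nu>"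
    and B0_basis: "card B0 = r" "\<nu> B0 \<noteq> \<infinity>"
    and B0_max: "\<And>B. card B = r \<Longrightarrow> \<nu> B \<noteq> \<infinity> \<Longrightarrow> card (B \<inter> \<sigma> ` R) \<le> card (B0 \<inter> \<sigma> ` R)"
begin

definition k :: nat where
  "k = card (B0 \<inter> \<sigma> ` R)"

definition T :: "'n set" where
  "T = B0 - \<sigma> ` R"

text \<open>Contract \<open>\<nu>\<close> by \<open>T\<close>, restrict it to \<open>\<sigma> ` R\<close>, pull it back along \<open>\<sigma>\<close> and twist it
  by the valuations \<open>c\<close> of the nonzero entries.\<close>
definition image_matroid :: "'n set \<Rightarrow> ereal" where
  "image_matroid I = (if I \<subseteq> R \<and> inj_on \<sigma> I \<and> card I = k
     then ereal (\<Sum>i\<in>I. c i) + \<nu> (\<sigma> ` I \<union> T) else \<infinity>)"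

lemma \<nu>_not_minf: "\<nu> I \<noteq> -\<infinity>"
  using vm unfolding valuated_matroid_def by auto

lemma image_not_in_T: "i \<in> R \<Longrightarrow> \<sigma> i \<notin> T"
  unfolding T_def by auto

lemma card_T: "card T + k = r"
proof -
  have "B0 = (B0 \<inter> \<sigma> ` R) \<union> T" "(B0 \<inter> \<sigma> ` R) \<inter> T = {}"
    unfolding T_def by auto
  then show ?thesis
    using B0_basis card_Un_disjoint[of "B0 \<inter> \<sigma> ` R" T] unfolding k_def by simp
qed

lemma card_image_Un_T:
  assumes "I \<subseteq> R" "inj_on \<sigma> I"
  shows "card (\<sigma> ` I \<union> T) = card I + card T"
proof -
  have "\<sigma> ` I \<inter> T = {}"
    using assms image_not_in_T by blast
  then show ?thesis
    using assms card_Un_disjoint[of "\<sigma> ` I" T] by (simp add: card_image)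
qed

lemma image_matroid_eq:
  "I \<subseteq> R \<Longrightarrow> inj_on \<sigma> I \<Longrightarrow> card I = k \<Longrightarrow> image_matroid I = ereal (\<Sum>i\<in>I. c i) + \<nu> (\<sigma> ` I \<union> T)"
  unfolding image_matroid_def by simp

lemma image_matroid_finite_imp:
  assumes "image_matroid I \<noteq> \<infinity>"
  shows "I \<subseteq> R" "inj_on \<sigma> I" "card I = k" "\<nu> (\<sigma> ` I \<union> T) \<noteq> \<infinity>"
  using assms unfolding image_matroid_def by (auto split: if_splits)

lemma image_matroid_not_minf: "image_matroid I \<noteq> -\<infinity>"
  unfolding image_matroid_def using \<nu>_not_minf by auto

lemma image_matroid_swap:
  assumes fin: "image_matroid I \<noteq> \<infinity>" and i: "i \<in> I"
    and j: "j \<in> R" "j \<notin> I" "\<sigma> j \<notin> \<sigma> ` (I - {i})"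
  shows "image_matroid (I - {i} \<union> {j}) =
    ereal ((\<Sum>l\<in>I. c l) - c i + c j) + \<nu> ((\<sigma> ` I \<union> T) - {\<sigma> i} \<union> {\<sigma> j})"
proof -
  note I = image_matroid_finite_imp[OF fin]
  have I': "I - {i} \<union> {j} = insert j (I - {i})"
    by auto
  have "I - {i} \<union> {j} \<subseteq> R"
    using I(1) j by auto
  moreover have "inj_on \<sigma> (I - {i} \<union> {j})"
    unfolding I' using j inj_on_subset[OF I(2), of "I - {i}"] by auto
  moreover have "card (I - {i} \<union> {j}) = k"
    unfolding I' using i j I(3) card_Suc_Diff1[of I i] by simp
  ultimately have "image_matroid (I - {i} \<union> {j}) =
      ereal (\<Sum>l\<in>I - {i} \<union> {j}. c l) + \<nu> (\<sigma> ` (I - {i} \<union> {j}) \<union> T)"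
    by (rule image_matroid_eq)
  moreover have "\<sigma> ` (I - {i} \<union> {j}) \<union> T = (\<sigma> ` I \<union> T) - {\<sigma> i} \<union> {\<sigma> j}"
    using I i j image_not_in_T by (auto simp: inj_on_image_set_diff[OF I(2)])
  moreover have "(\<Sum>l\<in>I - {i} \<union> {j}. c l) = (\<Sum>l\<in>I. c l) - c i + c j"
    unfolding I' using i j by (simp add: sum_diff1)
  ultimately show ?thesis
    by simp
qed

lemma image_matroid_double_swap:
  assumes fin: "image_matroid I \<noteq> \<infinity>" "image_matroid J \<noteq> \<infinity>" and i: "i \<in> I - J"
    and j: "j \<in> J - I" "\<sigma> j \<notin> \<sigma> ` (I - {i})" "\<sigma> i \<notin> \<sigma> ` (J - {j})"
  shows "image_matroid (I - {i} \<union> {j}) + image_matroid (J - {j} \<union> {i}) =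
    ereal ((\<Sum>l\<in>I. c l) + (\<Sum>l\<in>J. c l)) +
    (\<nu> ((\<sigma> ` I \<union> T) - {\<sigma> i} \<union> {\<sigma> j}) + \<nu> ((\<sigma> ` J \<union> T) - {\<sigma> j} \<union> {\<sigma> i}))"
proof -
  have "i \<in> R" "j \<in> R"
    using image_matroid_finite_imp(1)[OF fin(1)] image_matroid_finite_imp(1)[OF fin(2)] i j by auto
  then have "image_matroid (I - {i} \<union> {j}) + image_matroid (J - {j} \<union> {i}) =
      ereal ((\<Sum>l\<in>I. c l) - c i + c j) + \<nu> ((\<sigma> ` I \<union> T) - {\<sigma> i} \<union> {\<sigma> j}) +
      (ereal ((\<Sum>l\<in>J. c l) - c j + c i) + \<nu> ((\<sigma> ` J \<union> T) - {\<sigma> j} \<union> {\<sigma> i}))"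
    using image_matroid_swap[OF fin(1), of i j] image_matroid_swap[OF fin(2), of j i] i j by simp
  then show ?thesis
    by (simp add: ereal_add_regroup)
qed

lemma image_matroid_exchange:
  assumes fin: "image_matroid I \<noteq> \<infinity>" "image_matroid J \<noteq> \<infinity>" and i: "i \<in> I - J"
  shows "\<exists>j\<in>J - I. image_matroid (I - {i} \<union> {j}) + image_matroid (J - {j} \<union> {i})
           \<le> image_matroid I + image_matroid J"
proof -
  note I = image_matroid_finite_imp[OF fin(1)] and J = image_matroid_finite_imp[OF fin(2)]
  define Is where "Is = \<sigma> ` I \<union> T"
  define Js where "Js = \<sigma> ` J \<union> T"
  note swaps = image_matroid_double_swap[OF fin i, folded Is_def Js_def]
  have sum: "image_matroid I + image_matroid J = ereal ((\<Sum>l\<in>I. c l) + (\<Sum>l\<in>J. c l)) + (\<nu> Is + \<nu> Js)"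
    unfolding Is_def Js_def image_matroid_eq[OF I(1-3)] image_matroid_eq[OF J(1-3)] by (rule ereal_add_regroup)
  show ?thesis
  proof (cases "\<sigma> i \<in> \<sigma> ` J")
    case True
    then obtain j where j: "j \<in> J" "\<sigma> j = \<sigma> i"
      by auto
    then have "j \<notin> I"
      using i I(2) by (auto dest: inj_onD)
    moreover have "\<sigma> j \<notin> \<sigma> ` (I - {i})" "\<sigma> i \<notin> \<sigma> ` (J - {j})"
      using i j I(2) J(2) by (auto simp: inj_on_image_set_diff)
    moreover have "Is - {\<sigma> i} \<union> {\<sigma> j} = Is" "Js - {\<sigma> j} \<union> {\<sigma> i} = Js"
      using i j unfolding Is_def Js_def by (auto intro: rev_image_eqI)
    ultimately have "image_matroid (I - {i} \<union> {j}) + image_matroid (J - {j} \<union> {i}) =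
        image_matroid I + image_matroid J"
      using swaps[of j] sum j by simp
    then show ?thesis
      using j(1) \<open>j \<notin> I\<close> by (intro bexI[of _ j]) auto
  next
    case False
    have "card Is = r" "card Js = r"
      using card_image_Un_T I J card_T unfolding Is_def Js_def by auto
    moreover have "\<sigma> i \<in> Is - Js"
      using i False image_not_in_T I(1) unfolding Is_def Js_def by auto
    ultimately obtain js where js: "js \<in> Js - Is"
      and exch: "\<nu> (Is - {\<sigma> i} \<union> {js}) + \<nu> (Js - {js} \<union> {\<sigma> i}) \<le> \<nu> Is + \<nu> Js"
      using vm unfolding valuated_matroid_def by blast
    then obtain j where j: "j \<in> J" "js = \<sigma> j" "\<sigma> j \<notin> \<sigma> ` I"
      unfolding Is_def Js_def by auto
    then have "j \<in> J - I" "\<sigma> j \<notin> \<sigma> ` (I - {i})" "\<sigma> i \<notin> \<sigma> ` (J - {j})"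
      using False by auto
    then show ?thesis
      using swaps sum exch j(2) by (metis add_left_mono)
  qed
qed

lemma image_matroid_basis_exists: "\<exists>I. card I = k \<and> image_matroid I \<noteq> \<infinity>"
proof -
  have inv: "inv_into R \<sigma> s \<in> R" "\<sigma> (inv_into R \<sigma> s) = s" if "s \<in> \<sigma> ` R" for s
    using that by (simp_all add: inv_into_into f_inv_into_f)
  define I0 where "I0 = inv_into R \<sigma> ` (B0 \<inter> \<sigma> ` R)"
  have I0_R: "I0 \<subseteq> R"
    unfolding I0_def using inv(1) by auto
  have I0_image: "\<sigma> ` I0 = B0 \<inter> \<sigma> ` R"
    unfolding I0_def by (rule image_inv_into_cancel) auto
  have I0_inj: "inj_on \<sigma> I0"
    unfolding I0_def inj_on_def using inv(2) by auto
  have I0_card: "card I0 = k"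
    using card_image[OF I0_inj] I0_image unfolding k_def by simp
  have "\<sigma> ` I0 \<union> T = B0"
    using I0_image unfolding T_def by auto
  then have "image_matroid I0 \<noteq> \<infinity>"
    using image_matroid_eq[OF I0_R I0_inj I0_card] B0_basis(2) by simp
  then show ?thesis
    using I0_card by blast
qed

lemma valuated_matroid_image_matroid: "valuated_matroid k image_matroid"
  unfolding valuated_matroid_def
proof (intro conjI allI impI ballI image_matroid_not_minf image_matroid_basis_exists)
  fix I J :: "'n set" and i :: 'n
  assume "card I = k" "card J = k" and i: "i \<in> I - J"
  then have "\<not> J \<subseteq> I"
    using card_subset_eq[of I J] by auto
  then obtain j0 where j0: "j0 \<in> J - I"
    by blast
  show "\<exists>j\<in>J - I. image_matroid (I - {i} \<union> {j}) + image_matroid (J - {j} \<union> {i})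
          \<le> image_matroid I + image_matroid J"
  proof (cases "image_matroid I = \<infinity> \<or> image_matroid J = \<infinity>")
    case True
    then show ?thesis
      using j0 by auto
  next
    case False
    then show ?thesis
      using image_matroid_exchange i by blast
  qed
qed

lemma circuit_vec_image_matroid:
  assumes I: "I \<subseteq> R" "inj_on \<sigma> I" "card I = k + 1" and l: "l \<in> I"
  shows "circuit_vec image_matroid I l + (ereal (c l) + z) =
    ereal (\<Sum>i\<in>I. c i) + (circuit_vec \<nu> (\<sigma> ` I \<union> T) (\<sigma> l) + z)"
proof -
  have "I - {l} \<subseteq> R" "inj_on \<sigma> (I - {l})" "card (I - {l}) = k"
    using I l inj_on_subset[OF I(2)] by auto
  moreover have "\<sigma> ` (I - {l}) \<union> T = (\<sigma> ` I \<union> T) - {\<sigma> l}"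
    using I l image_not_in_T by (auto simp: inj_on_image_set_diff[OF I(2)])
  ultimately have "circuit_vec image_matroid I l = ereal (\<Sum>i\<in>I - {l}. c i) + \<nu> ((\<sigma> ` I \<union> T) - {\<sigma> l})"
    using l unfolding circuit_vec_def by (simp add: image_matroid_eq)
  moreover have "circuit_vec \<nu> (\<sigma> ` I \<union> T) (\<sigma> l) = \<nu> ((\<sigma> ` I \<union> T) - {\<sigma> l})"
    using l unfolding circuit_vec_def by simp
  moreover have "(\<Sum>i\<in>I. c i) = (\<Sum>i\<in>I - {l}. c i) + c l"
    using l by (simp add: sum_diff1)
  ultimately show ?thesis
    by (simp only: ereal_add_regroup)
qed

lemma circuit_vec_T_infinite:
  assumes I: "I \<subseteq> R" "inj_on \<sigma> I" "card I = k + 1" and t: "t \<in> T"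
  shows "circuit_vec \<nu> (\<sigma> ` I \<union> T) t = \<infinity>"
proof -
  have "card (\<sigma> ` I \<union> T - {t}) = r"
    using card_image_Un_T[OF I(1,2)] card_T I(3) t by simp
  moreover have "k + 1 \<le> card ((\<sigma> ` I \<union> T - {t}) \<inter> \<sigma> ` R)"
  proof -
    have "\<sigma> ` I \<subseteq> (\<sigma> ` I \<union> T - {t}) \<inter> \<sigma> ` R"
      using I(1) t image_not_in_T by auto
    then show ?thesis
      using card_mono[of _ "\<sigma> ` I"] card_image[OF I(2)] I(3) by fastforce
  qed
  ultimately have "\<nu> (\<sigma> ` I \<union> T - {t}) = \<infinity>"
    using B0_max unfolding k_def by fastforce
  then show ?thesis
    using t unfolding circuit_vec_def by simp
qed

lemma image_matroid_remove_parallel: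
  assumes "I \<subseteq> R" "i \<in> I" "l \<in> I" "\<sigma> l = \<sigma> i"
  shows "ereal (c l) + image_matroid (I - {l}) = ereal (c i) + image_matroid (I - {i})"
proof -
  have same_image: "\<sigma> ` (I - {l}) = \<sigma> ` (I - {i})"
  proof (cases "l = i")
    case False
    then have "I - {l} = insert i (I - {i, l})" "I - {i} = insert l (I - {i, l})"
      using assms by auto
    then show ?thesis
      using assms(4) by simp
  qed simp
  have same_card: "card (I - {l}) = card (I - {i})"
    using assms by simp
  have "inj_on \<sigma> (I - {l}) \<longleftrightarrow> inj_on \<sigma> (I - {i})"
    using same_image same_card by (metis card_image eq_card_imp_inj_on finite)
  moreover have "c l + (\<Sum>j\<in>I - {l}. c j) = c i + (\<Sum>j\<in>I - {i}. c j)"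
    using assms by (simp add: sum_diff1)
  ultimately show ?thesis
    using assms same_image same_card unfolding image_matroid_def by (auto simp: add.assoc[symmetric])
qed

lemma circuit_vec_image_matroid_parallel:
  assumes "I \<subseteq> R" "i \<in> I" "l \<in> I" "\<sigma> l = \<sigma> i"
  shows "circuit_vec image_matroid I l + (ereal (c l) + z) = circuit_vec image_matroid I i + (ereal (c i) + z)"
proof -
  have "circuit_vec image_matroid I l + (ereal (c l) + z) = (ereal (c l) + image_matroid (I - {l})) + z"
    using assms(3) unfolding circuit_vec_def by (simp add: ac_simps)
  also have "\<dots> = (ereal (c i) + image_matroid (I - {i})) + z"
    using image_matroid_remove_parallel[OF assms] by simp
  also have "\<dots> = circuit_vec image_matroid I i + (ereal (c i) + z)"
    using assms(2) unfolding circuit_vec_def by (simp add: ac_simps)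
  finally show ?thesis .
qed

lemma circuit_condition_image_inj:
  assumes x: "circuit_condition r \<nu> x" and I: "I \<subseteq> R" "inj_on \<sigma> I" "card I = k + 1" and i: "i \<in> I"
    and fin: "circuit_vec image_matroid I i + (ereal (c i) + x (\<sigma> i)) \<noteq> \<infinity>"
  shows "\<exists>l\<in>I. l \<noteq> i \<and> circuit_vec image_matroid I l + (ereal (c l) + x (\<sigma> l))
           \<le> circuit_vec image_matroid I i + (ereal (c i) + x (\<sigma> i))"
proof -
  define Is where "Is = \<sigma> ` I \<union> T"
  note pullback = circuit_vec_image_matroid[OF I, folded Is_def]
  have card_Is: "card Is = r + 1"
    using card_image_Un_T[OF I(1,2)] card_T I(3) unfolding Is_def by simp
  have fin_i: "circuit_vec \<nu> Is (\<sigma> i) + x (\<sigma> i) \<noteq> \<infinity>"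
    using fin pullback[OF i] by auto
  obtain j' where "j' \<noteq> \<sigma> i"
    and le: "circuit_vec \<nu> Is j' + x j' \<le> circuit_vec \<nu> Is (\<sigma> i) + x (\<sigma> i)"
    by (rule circuit_conditionD[OF x card_Is fin_i])
  then have "circuit_vec \<nu> Is j' + x j' \<noteq> \<infinity>"
    using fin_i by (auto simp: top_unique)
  then have "j' \<in> Is" "j' \<notin> T"
    using circuit_vec_finite_imp(1) circuit_vec_T_infinite[OF I] unfolding Is_def by force+
  then obtain l where l: "l \<in> I" "j' = \<sigma> l"
    unfolding Is_def by auto
  then have "circuit_vec image_matroid I l + (ereal (c l) + x (\<sigma> l))
      \<le> circuit_vec image_matroid I i + (ereal (c i) + x (\<sigma> i))"
    unfolding pullback[OF l(1)] pullback[OF i] using le by (simp add: add_left_mono)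
  moreover have "l \<noteq> i"
    using l \<open>j' \<noteq> \<sigma> i\<close> by auto
  ultimately show ?thesis
    using l(1) by blast
qed

lemma circuit_condition_image:
  assumes x: "circuit_condition r \<nu> x"
  shows "circuit_condition k image_matroid (trop_mat_vec (monomial_mat R \<sigma> c) x)"
  unfolding circuit_condition_def
proof (intro allI impI)
  fix I i
  define y where "y = trop_mat_vec (monomial_mat R \<sigma> c) x"
  assume card_I: "card I = k + 1" and fin: "circuit_vec image_matroid I i + y i \<noteq> \<infinity>"
  note i = circuit_vec_finite_imp[OF fin]
  have "i \<in> R"
    using i(3) unfolding y_def trop_mat_vec_monomial_mat by (auto split: if_splits)
  then have I_R: "I \<subseteq> R"
    using image_matroid_finite_imp(1)[OF i(2)] by auto
  then have y: "y l = ereal (c l) + x (\<sigma> l)" if "l \<in> I" for l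
    using that unfolding y_def trop_mat_vec_monomial_mat by auto
  show "\<exists>j. j \<noteq> i \<and> circuit_vec image_matroid I j + y j \<le> circuit_vec image_matroid I i + y i"
  proof (cases "inj_on \<sigma> I")
    case True
    have "circuit_vec image_matroid I i + (ereal (c i) + x (\<sigma> i)) \<noteq> \<infinity>"
      using fin y[OF i(1)] by simp
    then obtain l where "l \<in> I" "l \<noteq> i" and
      "circuit_vec image_matroid I l + (ereal (c l) + x (\<sigma> l))
        \<le> circuit_vec image_matroid I i + (ereal (c i) + x (\<sigma> i))"
      using circuit_condition_image_inj[OF x I_R True card_I i(1)] by blast
    then show ?thesis
      using y[OF i(1)] y by (intro exI[of _ l]) simp
  next
    case False
    have "inj_on \<sigma> (I - {i})"
      using image_matroid_finite_imp(2)[OF i(2)] .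
    then have "\<sigma> i \<in> \<sigma> ` (I - {i})"
      using False i(1) inj_on_insert[of \<sigma> i "I - {i}"] by (auto simp: insert_absorb)
    then obtain l where "l \<in> I - {i}" "\<sigma> i = \<sigma> l"
      by (rule imageE)
    then show ?thesis
      using circuit_vec_image_matroid_parallel[OF I_R i(1), of l "x (\<sigma> i)"] y[of l] y[OF i(1)]
      by (intro exI[of _ l]) auto
  qed
qed

lemma image_subset_trop_lin:
  "trop_mat_image (monomial_mat R \<sigma> c) (trop_lin r \<nu>) \<subseteq> trop_lin k image_matroid"
  unfolding trop_mat_image_def using circuit_condition_image by (auto simp: trop_lin_iff)

lemma cocircuit_vec_image_matroid:
  assumes J: "J \<subseteq> R" "inj_on \<sigma> J" "card J + 1 = k"
  shows "cocircuit_vec image_matroid J i =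
    ereal (\<Sum>l\<in>J. c l) + trop_mat_vec (monomial_mat R \<sigma> c) (cocircuit_vec \<nu> (\<sigma> ` J \<union> T)) i"
proof (cases "i \<in> R \<and> \<sigma> i \<notin> \<sigma> ` J")
  case True
  then have i: "i \<in> R" "i \<notin> J" "\<sigma> i \<notin> \<sigma> ` J \<union> T"
    using image_not_in_T by auto
  have "image_matroid (insert i J) = ereal (\<Sum>l\<in>insert i J. c l) + \<nu> (\<sigma> ` insert i J \<union> T)"
    using J True i by (intro image_matroid_eq) auto
  also have "\<dots> = ereal (\<Sum>l\<in>J. c l) + (ereal (c i) + \<nu> (insert (\<sigma> i) (\<sigma> ` J \<union> T)))"
    using i(2) by (simp add: add.assoc[symmetric] add.commute)
  finally show ?thesis
    using i unfolding cocircuit_vec_def trop_mat_vec_monomial_mat by simp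
next
  case False
  have "i \<in> J \<or> image_matroid (insert i J) = \<infinity>"
    using False J(1) unfolding image_matroid_def by auto
  moreover have "trop_mat_vec (monomial_mat R \<sigma> c) (cocircuit_vec \<nu> (\<sigma> ` J \<union> T)) i = \<infinity>"
    using False unfolding trop_mat_vec_monomial_mat cocircuit_vec_def by auto
  ultimately show ?thesis
    unfolding cocircuit_vec_def by auto
qed

lemma preimage_cocircuit_Min:
  fixes Z :: "'n set" and a :: "'n \<Rightarrow> real" and K :: "'n \<Rightarrow> 'n set"
  assumes Z: "Z \<noteq> {}" and K: "\<And>e. e \<in> Z \<Longrightarrow> K e \<subseteq> R \<and> inj_on \<sigma> (K e) \<and> card (K e) + 1 = k"
  defines "x \<equiv> \<lambda>j. Min ((\<lambda>e. ereal (a e + (\<Sum>l\<in>K e. c l)) + cocircuit_vec \<nu> (\<sigma> ` K e \<union> T) j) ` Z)"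
  shows "trop_mat_vec (monomial_mat R \<sigma> c) x =
      (\<lambda>i. Min ((\<lambda>e. ereal (a e) + cocircuit_vec image_matroid (K e) i) ` Z))"
    and "circuit_condition r \<nu> x"
    and "x j \<noteq> -\<infinity>"
proof -
  have "ereal (a e + (\<Sum>l\<in>K e. c l)) + trop_mat_vec (monomial_mat R \<sigma> c) (cocircuit_vec \<nu> (\<sigma> ` K e \<union> T)) i
      = ereal (a e) + cocircuit_vec image_matroid (K e) i" if "e \<in> Z" for e i
    using K[OF that] by (simp add: cocircuit_vec_image_matroid add.assoc[symmetric])
  then have "trop_mat_vec (monomial_mat R \<sigma> c) x i = Min ((\<lambda>e. ereal (a e) + cocircuit_vec image_matroid (K e) i) ` Z)"
    for i
    unfolding x_def trop_mat_vec_Min[OF finite Z] trop_mat_vec_shift by simp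
  then show "trop_mat_vec (monomial_mat R \<sigma> c) x =
      (\<lambda>i. Min ((\<lambda>e. ereal (a e) + cocircuit_vec image_matroid (K e) i) ` Z))"
    by blast
  have "card (\<sigma> ` K e \<union> T) + 1 = r" if "e \<in> Z" for e
    using K[OF that] card_image_Un_T card_T by auto
  then show "circuit_condition r \<nu> x"
    unfolding x_def using Z
    by (intro circuit_condition_Min circuit_condition_shift circuit_condition_cocircuit_vec[OF vm]) auto
  have "x j \<in> (\<lambda>e. ereal (a e + (\<Sum>l\<in>K e. c l)) + cocircuit_vec \<nu> (\<sigma> ` K e \<union> T) j) ` Z"
    unfolding x_def using Z by (intro Min_in) auto
  then show "x j \<noteq> -\<infinity>"
    using \<nu>_not_minf unfolding cocircuit_vec_def by (auto split: if_splits)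
qed

lemma trop_lin_subset_image:
  "trop_lin k image_matroid \<subseteq> trop_mat_image (monomial_mat R \<sigma> c) (trop_lin r \<nu>)"
proof
  fix y
  assume y: "y \<in> trop_lin k image_matroid"
  interpret y: trop_lin_point image_matroid k y
    using valuated_matroid_image_matroid y by unfold_locales
  obtain K a where Z: "y.support \<noteq> {}"
    and K: "\<And>e. e \<in> y.support \<Longrightarrow> e \<notin> K e \<and> card (K e) + 1 = k \<and> image_matroid (insert e (K e)) \<noteq> \<infinity>"
    and y_eq: "y = (\<lambda>f. Min ((\<lambda>e. ereal (a e) + cocircuit_vec image_matroid (K e) f) ` y.support))"
    by (rule y.cocircuit_decomposition) blast
  have K_indep: "K e \<subseteq> R \<and> inj_on \<sigma> (K e) \<and> card (K e) + 1 = k" if "e \<in> y.support" for e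
    using K[OF that] image_matroid_finite_imp[of "insert e (K e)"] by (auto intro: inj_on_subset)
  define x where "x = (\<lambda>j. Min ((\<lambda>e. ereal (a e + (\<Sum>l\<in>K e. c l)) + cocircuit_vec \<nu> (\<sigma> ` K e \<union> T) j) ` y.support))"
  note x = preimage_cocircuit_Min[of y.support K a, OF Z K_indep, folded x_def]
  have y_x: "trop_mat_vec (monomial_mat R \<sigma> c) x = y"
    using x(1) y_eq by simp
  obtain i where "y i \<noteq> \<infinity>"
    using y unfolding trop_lin_def proj_points_def by auto
  then obtain j where "x j \<noteq> \<infinity>"
    using trop_mat_vec_finite_imp y_x by metis
  then have "x \<in> trop_lin r \<nu>"
    using x(2,3) unfolding x_def trop_lin_iff proj_points_def by auto
  then have "y \<in> trop_mat_vec (monomial_mat R \<sigma> c) ` trop_lin r \<nu>"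
    using y_x by blast
  then show "y \<in> trop_mat_image (monomial_mat R \<sigma> c) (trop_lin r \<nu>)"
    using y unfolding trop_mat_image_def trop_lin_iff by blast
qed

lemma trop_mat_image_eq:
  "trop_mat_image (monomial_mat R \<sigma> c) (trop_lin r \<nu>) = trop_lin k image_matroid"
  using image_subset_trop_lin trop_lin_subset_image by (rule antisym)

end

theorem corollary2p25:
  fixes val :: "'k::field \<Rightarrow> ereal"
    and \<mu> :: "'n::finite set \<Rightarrow> ereal"
    and A :: "'n \<Rightarrow> 'n \<Rightarrow> 'k"
  assumes "nonarch_valuation val"
    and "valuated_matroid r \<mu>"
    and "weakly_monomial A"
  shows "tropical_linear_space (trop_mat_image (\<lambda>i j. val (A i j)) (trop_lin r \<mu>))"
proof -
  obtain R \<sigma> c where A: "(\<lambda>i j. val (A i j)) = monomial_mat R \<sigma> c"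
    using weakly_monomial_val_eq_monomial_mat[OF assms(1,3)] by blast
  have "{B. card B = r \<and> \<mu> B \<noteq> \<infinity>} \<noteq> {}"
    using assms(2) unfolding valuated_matroid_def by auto
  then obtain B0 where "B0 \<in> {B. card B = r \<and> \<mu> B \<noteq> \<infinity>}"
    and "\<And>B. B \<in> {B. card B = r \<and> \<mu> B \<noteq> \<infinity>} \<Longrightarrow> card (B \<inter> \<sigma> ` R) \<le> card (B0 \<inter> \<sigma> ` R)"
    using finite_obtain_maximizer[OF finite, of "{B. card B = r \<and> \<mu> B \<noteq> \<infinity>}" "\<lambda>B. card (B \<inter> \<sigma> ` R)"]
    by blast
  then interpret monomial_image \<mu> r R \<sigma> c B0
    using assms(2) by unfold_locales auto
  show ?thesis
    unfolding A tropical_linear_space_def trop_mat_image_eq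
    using valuated_matroid_image_matroid by blast
qed

end
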